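(* Let $X$ be a real Banach space with dual $X^*$, and let $f:X\to\mathbb{R}\cup\{+\infty\}$ be a proper, convex and lower semicontinuous function. Suppose that \[ p(x)\ge 0\quad\text{for every } x\in\operatorname{dom}\partial f \text{ and every } p\in\partial f(x). \] Then $0\in\partial f(0)$.
   Context: For $x_0\in\operatorname{dom} f:=\{x\in X: f(x)\neq+\infty\}$, the (convex-analysis) subdifferential is $\partial f(x_0):=\{p\in X^*: f(x)\ge f(x_0)+p(x-x_0)\ \forall x\in X\}$; if $x_0\notin\operatorname{dom} f$ then $\partial f(x_0)=\emptyset$. The set $\operatorname{dom}\partial f:=\{x\in X:\partial f(x)\neq\emptyset\}$. The hypothesis is written in the paper as $\langle \partial f(x),x\rangle\ge 0$ for all $x\in\operatorname{dom}\partial f$. *)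

theory Defs
  imports "HOL-Analysis.Analysis"
begin

text \<open>Functions X \<rightarrow> R \<union> {+\<infinity>} are modelled as maps into ereal that never take the value -\<infinity>.\<close>

definition proper_fun :: "('a \<Rightarrow> ereal) \<Rightarrow> bool" where
  "proper_fun f \<longleftrightarrow> (\<forall>x. f x \<noteq> -\<infinity>) \<and> (\<exists>x. f x \<noteq> \<infinity>)"

definition convex_fun :: "('a::real_vector \<Rightarrow> ereal) \<Rightarrow> bool" where
  "convex_fun f \<longleftrightarrow> (\<forall>x y t. 0 \<le> t \<and> t \<le> 1 \<longrightarrow>
      f ((1 - t) *\<^sub>R x + t *\<^sub>R y) \<le> ereal (1 - t) * f x + ereal t * f y)"

definition lsc_fun :: "('a::topological_space \<Rightarrow> ereal) \<Rightarrow> bool" where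
  "lsc_fun f \<longleftrightarrow> (\<forall>x0. \<forall>c < f x0. eventually (\<lambda>x. c < f x) (at x0))"

definition subdiff :: "('a::real_normed_vector \<Rightarrow> ereal) \<Rightarrow> 'a \<Rightarrow> ('a \<Rightarrow> real) set" where
  "subdiff f x0 = (if f x0 = \<infinity> then {} else
     {p. bounded_linear p \<and> (\<forall>x. f x \<ge> f x0 + ereal (p (x - x0)))})"

end

theory Submission
  imports Defs
begin

(*
  If f x1 < f 0, penalise f by K0 = \<delta> * norm with \<delta> > 0 so small that still
  f x1 + K0 x1 < f 0. Ekeland's variational principle with \<epsilon> = \<delta>/2, started at x1, yields
  a point z with f z + K0 z < f 0, hence z \<noteq> 0, which minimises f + K for
  K = K0 + \<epsilon> * norm (_ - z). As K is convex and Lipschitz, a Hahn-Banach argument (the sum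
  rule) produces p \<in> \<partial>f(z) with K z - K x \<le> p (x - z) for all x; at x = 0 this gives
  p z \<le> K 0 - K z \<le> (\<epsilon> - \<delta>) * norm z < 0, contradicting the hypothesis. So 0 minimises f,
  which means 0 \<in> \<partial>f(0).
*)

section \<open>Hahn-Banach for convex majorants\<close>

text \<open>A linear functional on a subspace, dominated by \<open>h\<close>, encoded by its graph so that
  the union of a chain of such functionals is again one.\<close>
definition linear_minorant_graph :: "('a::real_vector \<Rightarrow> real) \<Rightarrow> ('a \<times> real) set \<Rightarrow> bool" where
  "linear_minorant_graph h G \<longleftrightarrow>
     (\<forall>x a b. (x, a) \<in> G \<longrightarrow> (x, b) \<in> G \<longrightarrow> a = b) \<and> (0, 0) \<in> G \<and>
     (\<forall>x y a b. (x, a) \<in> G \<longrightarrow> (y, b) \<in> G \<longrightarrow> (x + y, a + b) \<in> G) \<and>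
     (\<forall>x a c. (x, a) \<in> G \<longrightarrow> (c *\<^sub>R x, c * a) \<in> G) \<and>
     (\<forall>x a. (x, a) \<in> G \<longrightarrow> a \<le> h x)"

lemma linear_minorant_graphD:
  assumes "linear_minorant_graph h G"
  shows linear_minorant_graph_unique: "\<And>x a b. (x, a) \<in> G \<Longrightarrow> (x, b) \<in> G \<Longrightarrow> a = b"
    and linear_minorant_graph_zero: "(0, 0) \<in> G"
    and linear_minorant_graph_add: "\<And>x y a b. (x, a) \<in> G \<Longrightarrow> (y, b) \<in> G \<Longrightarrow> (x + y, a + b) \<in> G"
    and linear_minorant_graph_scaleR: "\<And>x a c. (x, a) \<in> G \<Longrightarrow> (c *\<^sub>R x, c * a) \<in> G"
    and linear_minorant_graph_le: "\<And>x a. (x, a) \<in> G \<Longrightarrow> a \<le> h x"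
  using assms unfolding linear_minorant_graph_def by blast+

lemma linear_minorant_graph_Union_chain:
  assumes C: "C \<in> chains {G. linear_minorant_graph h G}" and "C \<noteq> {}"
  shows "linear_minorant_graph h (\<Union>C)"
proof -
  have good: "\<And>G. G \<in> C \<Longrightarrow> linear_minorant_graph h G"
    using C unfolding chains_def by blast
  have common: "\<exists>G\<in>C. p \<in> G \<and> q \<in> G" if pq: "p \<in> \<Union>C" "q \<in> \<Union>C" for p q
  proof -
    obtain A B where "A \<in> C" "B \<in> C" "p \<in> A" "q \<in> B" using pq by blast
    moreover have "A \<subseteq> B \<or> B \<subseteq> A"
      using C \<open>A \<in> C\<close> \<open>B \<in> C\<close> unfolding chains_def chain_subset_def by blast
    ultimately show ?thesis by blast
  qed
  show ?thesis unfolding linear_minorant_graph_def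
  proof (intro conjI allI impI)
    show "(0, 0) \<in> \<Union>C" using \<open>C \<noteq> {}\<close> good linear_minorant_graph_zero by blast
  next
    fix x a b assume "(x, a) \<in> \<Union>C" "(x, b) \<in> \<Union>C"
    then obtain G where "G \<in> C" "(x, a) \<in> G" "(x, b) \<in> G" using common by blast
    then show "a = b" using good linear_minorant_graph_unique by blast
  next
    fix x y a b assume "(x, a) \<in> \<Union>C" "(y, b) \<in> \<Union>C"
    then obtain G where "G \<in> C" "(x, a) \<in> G" "(y, b) \<in> G" using common by blast
    then show "(x + y, a + b) \<in> \<Union>C" using good linear_minorant_graph_add by blast
  next
    fix x a c assume "(x, a) \<in> \<Union>C"
    then show "(c *\<^sub>R x, c * a) \<in> \<Union>C" using good linear_minorant_graph_scaleR by blast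
  next
    fix x a assume "(x, a) \<in> \<Union>C"
    then show "a \<le> h x" using good linear_minorant_graph_le by blast
  qed
qed

lemma exists_maximal_linear_minorant_graph:
  assumes "0 \<le> h 0"
  obtains M where "linear_minorant_graph h M"
    and "\<And>G. linear_minorant_graph h G \<Longrightarrow> M \<subseteq> G \<Longrightarrow> G = M"
proof -
  let ?A = "{G. linear_minorant_graph h G}"
  have "\<exists>U\<in>?A. \<forall>X\<in>C. X \<subseteq> U" if C: "C \<in> chains ?A" for C
  proof (cases "C = {}")
    case True
    have "linear_minorant_graph h {(0, 0)}"
      using assms unfolding linear_minorant_graph_def by auto
    then show ?thesis using True by blast
  next
    case False
    then show ?thesis using linear_minorant_graph_Union_chain[OF C False] by blast
  qed
  then have "\<forall>C\<in>chains ?A. \<exists>U\<in>?A. \<forall>X\<in>C. X \<subseteq> U" by blast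
  from Zorn_Lemma2[OF this] obtain M where "M \<in> ?A" "\<forall>X\<in>?A. M \<subseteq> X \<longrightarrow> X = M" by blast
  then show thesis using that by blast
qed

lemma linear_minorant_graph_slope_le:
  assumes h: "convex_on UNIV h" and G: "linear_minorant_graph h G"
    and xa: "(x, a) \<in> G" and yb: "(y, b) \<in> G" and s: "0 < s" and t: "0 < t"
  shows "(b - h (y - s *\<^sub>R v)) / s \<le> (h (x + t *\<^sub>R v) - a) / t"
proof -
  define \<mu> where "\<mu> = s / (s + t)"
  have \<mu>: "0 \<le> \<mu>" "\<mu> \<le> 1"
    using s t by (auto simp: \<mu>_def field_simps)
  have "(1 - \<mu>) *\<^sub>R (y - s *\<^sub>R v) + \<mu> *\<^sub>R (x + t *\<^sub>R v)
      = (1 - \<mu>) *\<^sub>R y + \<mu> *\<^sub>R x + (\<mu> * t - (1 - \<mu>) * s) *\<^sub>R v"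
    by (simp add: algebra_simps)
  also have "\<mu> * t - (1 - \<mu>) * s = 0"
    unfolding \<mu>_def using s t by (simp add: field_simps)
  finally have point: "(1 - \<mu>) *\<^sub>R (y - s *\<^sub>R v) + \<mu> *\<^sub>R (x + t *\<^sub>R v) = (1 - \<mu>) *\<^sub>R y + \<mu> *\<^sub>R x"
    by simp
  have "((1 - \<mu>) *\<^sub>R y + \<mu> *\<^sub>R x, (1 - \<mu>) * b + \<mu> * a) \<in> G"
    using linear_minorant_graph_add[OF G linear_minorant_graph_scaleR[OF G yb] linear_minorant_graph_scaleR[OF G xa]] .
  then have "(1 - \<mu>) * b + \<mu> * a \<le> h ((1 - \<mu>) *\<^sub>R y + \<mu> *\<^sub>R x)"
    by (rule linear_minorant_graph_le[OF G])
  also have "\<dots> \<le> (1 - \<mu>) * h (y - s *\<^sub>R v) + \<mu> * h (x + t *\<^sub>R v)"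
    unfolding point[symmetric] by (rule convex_onD[OF h \<mu>(1,2)]) simp_all
  finally have "(s + t) * ((1 - \<mu>) * b + \<mu> * a)
      \<le> (s + t) * ((1 - \<mu>) * h (y - s *\<^sub>R v) + \<mu> * h (x + t *\<^sub>R v))"
    using s t by simp
  moreover have "(s + t) * (1 - \<mu>) = t" "(s + t) * \<mu> = s"
    using s t by (simp_all add: \<mu>_def field_simps)
  ultimately have "t * b + s * a \<le> t * h (y - s *\<^sub>R v) + s * h (x + t *\<^sub>R v)"
    by (simp add: distrib_left mult.assoc[symmetric])
  then show ?thesis using s t by (simp add: field_simps)
qed

lemma linear_minorant_graph_extension_value:
  assumes h: "convex_on UNIV h" and G: "linear_minorant_graph h G"
  obtains c where "\<And>x a t. (x, a) \<in> G \<Longrightarrow> a + t * c \<le> h (x + t *\<^sub>R v)"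
proof -
  define L where "L = {(b - h (y - s *\<^sub>R v)) / s | y b s. (y, b) \<in> G \<and> 0 < s}"
  have L_le: "l \<le> (h (x + t *\<^sub>R v) - a) / t" if "l \<in> L" "(x, a) \<in> G" "0 < t" for l x a t
  proof -
    obtain y b s where "l = (b - h (y - s *\<^sub>R v)) / s" "(y, b) \<in> G" "0 < s"
      using \<open>l \<in> L\<close> unfolding L_def by blast
    then show ?thesis using linear_minorant_graph_slope_le[OF h G that(2) _ _ that(3)] by blast
  qed
  have "(0 - h (0 - 1 *\<^sub>R v)) / 1 \<in> L"
    unfolding L_def by (rule CollectI, intro exI[of _ 0] exI[of _ 1])
      (simp add: linear_minorant_graph_zero[OF G])
  then have L_ne: "L \<noteq> {}" by blast
  have "bdd_above L"
  proof (rule bdd_aboveI)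
    fix l assume "l \<in> L"
    show "l \<le> (h (0 + 1 *\<^sub>R v) - 0) / 1"
      using L_le[OF \<open>l \<in> L\<close> linear_minorant_graph_zero[OF G], of 1] by simp
  qed
  \<comment> \<open>By the slope inequality every left slope in \<open>L\<close> lies below every right slope.\<close>
  define c where "c = Sup L"
  show thesis
  proof (rule that)
    fix x a and t :: real assume xa: "(x, a) \<in> G"
    consider "0 < t" | "t = 0" | "t < 0" using less_linear[of 0 t] by blast
    then show "a + t * c \<le> h (x + t *\<^sub>R v)"
    proof cases
      case 1
      have "c \<le> (h (x + t *\<^sub>R v) - a) / t"
        unfolding c_def using L_ne L_le[OF _ xa 1] by (rule cSup_least)
      then show ?thesis using 1 by (simp add: field_simps)
    next
      case 2
      then show ?thesis using linear_minorant_graph_le[OF G xa] by simp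
    next
      case 3
      have "(a - h (x - (- t) *\<^sub>R v)) / (- t) \<in> L"
        unfolding L_def by (rule CollectI, intro exI[of _ x] exI[of _ a] exI[of _ "- t"])
          (simp add: xa 3)
      then have "(a - h (x - (- t) *\<^sub>R v)) / (- t) \<le> c"
        unfolding c_def using \<open>bdd_above L\<close> by (rule cSup_upper)
      then show ?thesis using 3 by (simp add: field_simps)
    qed
  qed
qed

lemma linear_minorant_graph_multiple_eq_zero:
  assumes G: "linear_minorant_graph h G" and v: "\<forall>a. (v, a) \<notin> G" and "(t *\<^sub>R v, a) \<in> G"
  shows "t = 0"
proof (rule ccontr)
  assume "t \<noteq> 0"
  then have "(v, (1 / t) * a) \<in> G"
    using linear_minorant_graph_scaleR[OF G \<open>(t *\<^sub>R v, a) \<in> G\<close>, of "1 / t"] by simp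
  then show False using v by blast
qed

lemma linear_minorant_graph_adjoin:
  assumes G: "linear_minorant_graph h G" and v: "\<forall>a. (v, a) \<notin> G"
    and c: "\<And>x a t. (x, a) \<in> G \<Longrightarrow> a + t * c \<le> h (x + t *\<^sub>R v)"
  defines "G' \<equiv> {(x + t *\<^sub>R v, a + t * c) | x a t. (x, a) \<in> G}"
  shows "linear_minorant_graph h G'" and "G \<subseteq> G'" and "(v, c) \<in> G' - G"
proof -
  show "linear_minorant_graph h G'" unfolding linear_minorant_graph_def
  proof (intro conjI allI impI)
    fix x a b assume "(x, a) \<in> G'" "(x, b) \<in> G'"
    then obtain y1 a1 t1 y2 a2 t2 where e: "(y1, a1) \<in> G" "(y2, a2) \<in> G"
      "x = y1 + t1 *\<^sub>R v" "x = y2 + t2 *\<^sub>R v" "a = a1 + t1 * c" "b = a2 + t2 * c"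
      unfolding G'_def by blast
    have "(y1 + (-1) *\<^sub>R y2, a1 + (-1) * a2) \<in> G"
      using linear_minorant_graph_add[OF G e(1) linear_minorant_graph_scaleR[OF G e(2)]] .
    moreover have "y1 + (-1) *\<^sub>R y2 = (t2 - t1) *\<^sub>R v"
      using e(3,4) by (simp add: algebra_simps)
    ultimately have "((t2 - t1) *\<^sub>R v, a1 + (-1) * a2) \<in> G" by simp
    then have "t2 - t1 = 0" by (rule linear_minorant_graph_multiple_eq_zero[OF G v])
    then show "a = b" using e linear_minorant_graph_unique[OF G] by auto
  next
    show "(0, 0) \<in> G'" unfolding G'_def using linear_minorant_graph_zero[OF G] by force
  next
    fix x y a b assume "(x, a) \<in> G'" "(y, b) \<in> G'"
    then obtain y1 a1 t1 y2 a2 t2 where e: "(y1, a1) \<in> G" "(y2, a2) \<in> G"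
      "x = y1 + t1 *\<^sub>R v" "y = y2 + t2 *\<^sub>R v" "a = a1 + t1 * c" "b = a2 + t2 * c"
      unfolding G'_def by blast
    have "(x + y, a + b) = ((y1 + y2) + (t1 + t2) *\<^sub>R v, (a1 + a2) + (t1 + t2) * c)"
      using e by (simp add: algebra_simps)
    then show "(x + y, a + b) \<in> G'"
      unfolding G'_def using linear_minorant_graph_add[OF G e(1,2)] by blast
  next
    fix x a r assume "(x, a) \<in> G'"
    then obtain y a1 t where e: "(y, a1) \<in> G" "x = y + t *\<^sub>R v" "a = a1 + t * c"
      unfolding G'_def by blast
    have "(r *\<^sub>R x, r * a) = (r *\<^sub>R y + (r * t) *\<^sub>R v, r * a1 + (r * t) * c)"
      using e by (simp add: algebra_simps)
    then show "(r *\<^sub>R x, r * a) \<in> G'"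
      unfolding G'_def using linear_minorant_graph_scaleR[OF G e(1)] by blast
  next
    fix x a assume "(x, a) \<in> G'"
    then obtain y a1 t where "(y, a1) \<in> G" "x = y + t *\<^sub>R v" "a = a1 + t * c"
      unfolding G'_def by blast
    then show "a \<le> h x" using c by blast
  qed
  show "G \<subseteq> G'" unfolding G'_def by (force intro: exI[of _ 0])
  show "(v, c) \<in> G' - G"
    unfolding G'_def using v linear_minorant_graph_zero[OF G] by (force intro: exI[of _ 1])
qed

lemma convex_on_has_linear_minorant:
  fixes h :: "'a::real_vector \<Rightarrow> real"
  assumes h: "convex_on UNIV h" and h0: "0 \<le> h 0"
  obtains p where "linear p" and "\<And>x. p x \<le> h x"
proof -
  obtain M where M: "linear_minorant_graph h M"
    and maximal: "\<And>G. linear_minorant_graph h G \<Longrightarrow> M \<subseteq> G \<Longrightarrow> G = M"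
    using exists_maximal_linear_minorant_graph[where h = h, OF h0] by blast
  have total: "\<exists>a. (x, a) \<in> M" for x
  proof (rule ccontr)
    assume x: "\<nexists>a. (x, a) \<in> M"
    obtain c where c: "\<And>y a t. (y, a) \<in> M \<Longrightarrow> a + t * c \<le> h (y + t *\<^sub>R x)"
      using linear_minorant_graph_extension_value[OF h M, where v = x] by blast
    define G where "G = {(y + t *\<^sub>R x, a + t * c) | y a t. (y, a) \<in> M}"
    have "linear_minorant_graph h G" "M \<subseteq> G" "(x, c) \<in> G - M"
      using linear_minorant_graph_adjoin[OF M _ c] x unfolding G_def by blast+
    then show False using maximal by blast
  qed
  define p where "p x = (THE a. (x, a) \<in> M)" for x
  have graph: "(x, a) \<in> M \<longleftrightarrow> p x = a" for x a
  proof -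
    obtain b where b: "(x, b) \<in> M" using total by blast
    then have "p x = b" unfolding p_def using linear_minorant_graph_unique[OF M] by blast
    then show ?thesis using b linear_minorant_graph_unique[OF M] by blast
  qed
  show thesis
  proof
    show "linear p"
    proof
      show "p (x + y) = p x + p y" for x y
        using linear_minorant_graph_add[OF M] graph by blast
      show "p (r *\<^sub>R x) = r *\<^sub>R p x" for r x
        using linear_minorant_graph_scaleR[OF M] graph by simp
    qed
    show "p x \<le> h x" for x
      using graph linear_minorant_graph_le[OF M] by blast
  qed
qed

section \<open>Convex functions\<close>

lemma convex_on_max:
  assumes "convex_on S f" and "convex_on S g"
  shows "convex_on S (\<lambda>x. max (f x) (g x))"
proof (rule convex_onI)
  fix t :: real and x y assume t: "0 < t" "t < 1" and xy: "x \<in> S" "y \<in> S"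
  have "f ((1 - t) *\<^sub>R x + t *\<^sub>R y) \<le> (1 - t) * max (f x) (g x) + t * max (f y) (g y)"
    using convex_onD[OF assms(1), of t x y] t xy
    by (smt (verit) max.cobounded1 mult_left_mono)
  moreover have "g ((1 - t) *\<^sub>R x + t *\<^sub>R y) \<le> (1 - t) * max (f x) (g x) + t * max (f y) (g y)"
    using convex_onD[OF assms(2), of t x y] t xy
    by (smt (verit) max.cobounded2 mult_left_mono)
  ultimately show "max (f ((1 - t) *\<^sub>R x + t *\<^sub>R y)) (g ((1 - t) *\<^sub>R x + t *\<^sub>R y))
      \<le> (1 - t) * max (f x) (g x) + t * max (f y) (g y)" by simp
qed (use assms convex_on_imp_convex in blast)

lemma convex_on_norm_diff: "convex_on UNIV (\<lambda>x. norm (x - z))"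
  using convex_on_dist[of UNIV z] by (simp add: dist_norm norm_minus_commute)

lemma convex_on_norm_excess: "convex_on UNIV (\<lambda>x. max 0 (norm x - r))"
proof (rule convex_on_max)
  show "convex_on UNIV (\<lambda>x. norm x - r)"
    using convex_on_norm_diff[of 0] by (intro convex_on_diff) (simp_all add: concave_on_const)
qed (simp add: convex_on_const)

lemma lipschitz_on_norm_diff: "1-lipschitz_on U (\<lambda>x. norm (x - z))"
  by (rule lipschitz_onI) (use norm_triangle_ineq3[of "x - z" "y - z" for x y] in \<open>simp_all add: dist_norm\<close>)

lemma lipschitz_on_norm_excess: "1-lipschitz_on U (\<lambda>x. max 0 (norm x - r))"
proof (rule lipschitz_onI)
  fix x y
  show "dist (max 0 (norm x - r)) (max 0 (norm y - r)) \<le> 1 * dist x y"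
    using norm_triangle_ineq3[of x y] by (simp add: dist_norm dist_real_def abs_le_iff max_def)
qed simp

lemma convex_on_Inf_image:
  fixes e :: "'a::real_vector \<Rightarrow> 'b::real_vector \<Rightarrow> real"
  assumes D: "convex D" "D \<noteq> {}" and bdd: "\<And>u. bdd_below (e u ` D)"
    and e: "\<And>u v a b t. a \<in> D \<Longrightarrow> b \<in> D \<Longrightarrow> 0 \<le> t \<Longrightarrow> t \<le> 1 \<Longrightarrow>
      e ((1 - t) *\<^sub>R u + t *\<^sub>R v) ((1 - t) *\<^sub>R a + t *\<^sub>R b) \<le> (1 - t) * e u a + t * e v b"
  shows "convex_on UNIV (\<lambda>u. Inf (e u ` D))"
proof (rule convex_onI)
  define g where "g u = Inf (e u ` D)" for u
  have g_le: "a \<in> D \<Longrightarrow> g u \<le> e u a" for u a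
    unfolding g_def using bdd by (auto intro: cInf_lower)
  have le_g: "(\<And>a. a \<in> D \<Longrightarrow> c \<le> e u a) \<Longrightarrow> c \<le> g u" for u c
    unfolding g_def using D(2) by (auto intro: cInf_greatest)
  fix t :: real and u v :: 'a assume t: "0 < t" "t < 1"
  define w where "w = (1 - t) *\<^sub>R u + t *\<^sub>R v"
  have pairs: "g w \<le> (1 - t) * e u a + t * e v b" if "a \<in> D" "b \<in> D" for a b
  proof -
    have "(1 - t) *\<^sub>R a + t *\<^sub>R b \<in> D" using convexD[OF D(1) that] t by simp
    then have "g w \<le> e w ((1 - t) *\<^sub>R a + t *\<^sub>R b)" by (rule g_le)
    also have "\<dots> \<le> (1 - t) * e u a + t * e v b"
      unfolding w_def using e[OF that, of t u v] t by simp
    finally show ?thesis .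
  qed
  have "g w \<le> (1 - t) * g u + t * e v b" if "b \<in> D" for b
  proof -
    have "(g w - t * e v b) / (1 - t) \<le> g u"
      by (rule le_g) (use pairs[OF _ that] t in \<open>simp add: field_simps\<close>)
    with t show ?thesis by (simp add: field_simps)
  qed
  then have "(g w - (1 - t) * g u) / t \<le> g v"
    by (intro le_g) (use t in \<open>simp add: field_simps\<close>)
  with t show "g w \<le> (1 - t) * g u + t * g v" by (simp add: field_simps)
qed simp

section \<open>Lower semicontinuous extended-real functions\<close>

lemma lsc_fun_add_continuous:
  fixes f :: "'a::metric_space \<Rightarrow> ereal"
  assumes lsc: "lsc_fun f" and f: "\<And>x. f x \<noteq> -\<infinity>" and K: "\<And>x. isCont K x"
  shows "lsc_fun (\<lambda>x. f x + ereal (K x))"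
  unfolding lsc_fun_def
proof (intro allI impI)
  fix x0 c assume c: "c < f x0 + ereal (K x0)"
  show "eventually (\<lambda>x. c < f x + ereal (K x)) (at x0)"
  proof (cases c)
    case MInf
    then show ?thesis using f by (auto intro!: always_eventually)
  next
    case PInf
    then show ?thesis using c by simp
  next
    case (real c0)
    then have "ereal (c0 - K x0) < f x0" using c f[of x0] by (cases "f x0") auto
    then obtain r where "c0 - K x0 < r" "ereal r < f x0"
      using ereal_dense2 by force
    then obtain e where e: "0 < e" "ereal (c0 - K x0 + e) < f x0"
      by (intro that[of "r - (c0 - K x0)"]) simp_all
    have "eventually (\<lambda>x. ereal (c0 - K x0 + e) < f x) (at x0)"
      using lsc e(2) unfolding lsc_fun_def by blast
    moreover have "eventually (\<lambda>x. dist (K x) (K x0) < e) (at x0)"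
      using K[of x0] e(1) unfolding isCont_def by (rule tendstoD)
    ultimately show ?thesis
    proof eventually_elim
      case (elim x)
      then show ?case using real f[of x] by (cases "f x") (auto simp: dist_real_def abs_less_iff)
    qed
  qed
qed

lemma closed_sublevel_lsc_fun:
  assumes "lsc_fun g"
  shows "closed {x. g x \<le> c}"
proof -
  have "open {x. c < g x}"
  proof (subst open_subopen, intro ballI)
    fix x assume "x \<in> {x. c < g x}"
    then have "eventually (\<lambda>y. c < g y) (nhds x)"
      using assms unfolding lsc_fun_def eventually_nhds_conv_at by simp
    then show "\<exists>T. open T \<and> x \<in> T \<and> T \<subseteq> {x. c < g x}"
      unfolding eventually_nhds by blast
  qed
  then show ?thesis by (simp add: closed_def Collect_neg_eq[symmetric] not_le)
qed

lemma convex_funD_ereal: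
  assumes "convex_fun f" "0 \<le> t" "t \<le> 1" "f x = ereal a" "f y = ereal b"
  shows "f ((1 - t) *\<^sub>R x + t *\<^sub>R y) \<le> ereal ((1 - t) * a + t * b)"
  using assms unfolding convex_fun_def by (metis times_ereal.simps(1) plus_ereal.simps(1))

lemma ereal_add_mult_less:
  assumes "ereal a < c" and "0 \<le> r"
  obtains \<delta> where "0 < \<delta>" and "ereal (a + \<delta> * r) < c"
proof -
  obtain b where "a < b" "ereal b < c" using assms(1) ereal_dense2 by force
  define \<delta> where "\<delta> = (b - a) / (r + 1)"
  have "0 < \<delta>"
    using \<open>a < b\<close> assms(2) unfolding \<delta>_def by (intro divide_pos_pos) simp_all
  have "\<delta> * r = (b - a) * (r / (r + 1))" unfolding \<delta>_def by simp
  also have "\<dots> \<le> (b - a) * 1"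
    using \<open>a < b\<close> assms(2) by (intro mult_left_mono) (simp_all add: divide_le_eq_1)
  finally have "ereal (a + \<delta> * r) \<le> ereal b" by simp
  then show thesis using that \<open>0 < \<delta>\<close> \<open>ereal b < c\<close> le_less_trans by blast
qed

lemma convex_fun_cone_minorant:
  fixes f :: "'a::real_normed_vector \<Rightarrow> ereal"
  assumes cvx: "convex_fun f" and lsc: "lsc_fun f" and f: "\<And>x. f x \<noteq> -\<infinity>"
    and fx1: "f x1 = ereal a"
  obtains B where "0 \<le> B" and "\<And>x. ereal (a - 1 - B * norm (x - x1)) \<le> f x"
proof -
  have "eventually (\<lambda>w. ereal (a - 1) < f w) (at x1)"
    using lsc fx1 unfolding lsc_fun_def by simp
  then obtain d where d: "0 < d"
    and near': "\<And>w. w \<noteq> x1 \<Longrightarrow> dist w x1 < d \<Longrightarrow> ereal (a - 1) < f w"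
    unfolding eventually_at by auto
  have near: "ereal (a - 1) < f w" if "norm (w - x1) < d" for w
    using near'[of w] that fx1 by (cases "w = x1") (simp_all add: dist_norm)
  have "ereal (a - 1 - (2 / d) * norm (x - x1)) \<le> f x" for x
  proof (cases "f x")
    case (real b)
    show ?thesis
    proof (cases "norm (x - x1) < d")
      case True
      have "ereal (a - 1 - (2 / d) * norm (x - x1)) \<le> ereal (a - 1)" using d by simp
      also have "\<dots> \<le> f x" using near[OF True] by simp
      finally show ?thesis .
    next
      case False
      define l where "l = (d / 2) / norm (x - x1)"
      have nx: "0 < norm (x - x1)" using False d by linarith
      have l: "0 \<le> l" "l \<le> 1" "1 / l = (2 / d) * norm (x - x1)"
        unfolding l_def using nx False d by (auto simp: field_simps)
      define y where "y = (1 - l) *\<^sub>R x1 + l *\<^sub>R x"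
      have "y - x1 = l *\<^sub>R (x - x1)" unfolding y_def by (simp add: algebra_simps)
      then have "norm (y - x1) = d / 2" unfolding l_def using nx d by simp
      then have "ereal (a - 1) < f y" using near d by simp
      also have "f y \<le> ereal ((1 - l) * a + l * b)"
        unfolding y_def using convex_funD_ereal[OF cvx l(1,2) fx1 real] .
      finally have "l * a - 1 < l * b" by (simp add: algebra_simps)
      then have "a - 1 / l < b" using l(1) nx d unfolding l_def by (simp add: field_simps)
      then show ?thesis using real l(3) by simp
    qed
  qed (use f in simp_all)
  then show thesis using d by (intro that[of "2 / d"]) simp_all
qed

section \<open>Ekeland's variational principle\<close>

definition ekeland_set :: "('a::real_normed_vector \<Rightarrow> ereal) \<Rightarrow> real \<Rightarrow> 'a \<Rightarrow> 'a set" where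
  "ekeland_set F \<epsilon> x = {y. F y + ereal (\<epsilon> * norm (y - x)) \<le> F x}"

lemma ekeland_set_self: "x \<in> ekeland_set F \<epsilon> x"
  by (simp add: ekeland_set_def)

lemma ekeland_set_trans:
  assumes "0 \<le> \<epsilon>" "y \<in> ekeland_set F \<epsilon> x" "w \<in> ekeland_set F \<epsilon> y"
  shows "w \<in> ekeland_set F \<epsilon> x"
proof -
  have "\<epsilon> * norm (w - x) \<le> \<epsilon> * norm (w - y) + \<epsilon> * norm (y - x)"
    using mult_left_mono[OF norm_triangle_ineq[of "w - y" "y - x"] assms(1)]
    by (simp add: distrib_left)
  then have "F w + ereal (\<epsilon> * norm (w - x)) \<le> F w + ereal (\<epsilon> * norm (w - y)) + ereal (\<epsilon> * norm (y - x))"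
    by (simp add: add.assoc add_left_mono)
  also have "\<dots> \<le> F y + ereal (\<epsilon> * norm (y - x))"
    using assms(3) unfolding ekeland_set_def by (simp add: add_right_mono)
  also have "\<dots> \<le> F x"
    using assms(2) unfolding ekeland_set_def by simp
  finally show ?thesis unfolding ekeland_set_def by simp
qed

lemma ekeland_set_le:
  assumes "0 \<le> \<epsilon>" "y \<in> ekeland_set F \<epsilon> x"
  shows "F y \<le> F x"
proof -
  have "F y \<le> F y + ereal (\<epsilon> * norm (y - x))"
    using assms(1) by (simp add: add_increasing2)
  also have "\<dots> \<le> F x" using assms(2) unfolding ekeland_set_def by simp
  finally show ?thesis .
qed

lemma closed_ekeland_set:
  assumes "lsc_fun F" and "\<And>x. F x \<noteq> -\<infinity>"
  shows "closed (ekeland_set F \<epsilon> x)"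
  unfolding ekeland_set_def
  by (intro closed_sublevel_lsc_fun lsc_fun_add_continuous assms continuous_intros)

lemma ekeland_set_near_Inf:
  assumes lb: "\<And>x. ereal m \<le> F x" and "F x \<noteq> \<infinity>" and "0 < \<delta>"
  obtains y where "y \<in> ekeland_set F \<epsilon> x" and "F y < (INF w\<in>ekeland_set F \<epsilon> x. F w) + ereal \<delta>"
proof -
  let ?inf = "INF w\<in>ekeland_set F \<epsilon> x. F w"
  have "ereal m \<le> ?inf" using lb by (rule INF_greatest)
  moreover have "?inf \<le> F x" using ekeland_set_self by (rule INF_lower)
  ultimately have "?inf < ?inf + ereal \<delta>"
    using assms(2,3) by (cases ?inf) auto
  then show thesis using that unfolding INF_less_iff by blast
qed

lemma ekeland_nested_sequence:
  fixes F :: "'a::real_normed_vector \<Rightarrow> ereal"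
  assumes lb: "\<And>x. ereal m \<le> F x" and x0: "F x0 \<noteq> \<infinity>" and \<epsilon>: "0 < \<epsilon>"
  obtains xs where "xs 0 = x0" and "\<And>n k. xs (n + k) \<in> ekeland_set F \<epsilon> (xs n)"
    and "\<And>n y. y \<in> ekeland_set F \<epsilon> (xs (Suc n)) \<Longrightarrow> \<epsilon> * norm (y - xs (Suc n)) \<le> (1/2)^n"
proof -
  let ?S = "ekeland_set F \<epsilon>"
  define inf where "inf x = (INF w\<in>?S x. F w)" for x
  define next_point where "next_point x n = (SOME y. y \<in> ?S x \<and> F y < inf x + ereal ((1/2)^n))" for x n
  have next_point: "next_point x n \<in> ?S x \<and> F (next_point x n) < inf x + ereal ((1/2)^n)"
    if "F x \<noteq> \<infinity>" for x n
  proof -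
    have "\<exists>y. y \<in> ?S x \<and> F y < inf x + ereal ((1/2)^n)"
      unfolding inf_def
      by (rule ekeland_set_near_Inf[where F = F and \<epsilon> = \<epsilon> and \<delta> = "(1/2)^n"]) (use lb that in auto)
    then show ?thesis unfolding next_point_def by (rule someI_ex)
  qed
  define xs where "xs = rec_nat x0 (\<lambda>n x. next_point x n)"
  have xs_Suc: "xs (Suc n) = next_point (xs n) n" for n unfolding xs_def by simp
  have finite: "F (xs n) \<noteq> \<infinity>" for n
  proof (induction n)
    case (Suc n)
    have "xs (Suc n) \<in> ?S (xs n)" using next_point[OF Suc, of n] xs_Suc by simp
    then have "F (xs (Suc n)) \<le> F (xs n)" by (rule ekeland_set_le[OF less_imp_le[OF \<epsilon>]])
    then show ?case using Suc by auto
  qed (simp add: xs_def x0)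
  have step: "xs (Suc n) \<in> ?S (xs n)" "F (xs (Suc n)) < inf (xs n) + ereal ((1/2)^n)" for n
    using next_point[OF finite[of n]] xs_Suc by simp_all
  show thesis
  proof
    show "xs 0 = x0" by (simp add: xs_def)
    show "xs (n + k) \<in> ?S (xs n)" for n k
      by (induction k) (use ekeland_set_self ekeland_set_trans[OF less_imp_le[OF \<epsilon>] _ step(1)] in auto)
    show "\<epsilon> * norm (y - xs (Suc n)) \<le> (1/2)^n" if y: "y \<in> ?S (xs (Suc n))" for n y
    proof -
      have "F y \<noteq> \<infinity>" using ekeland_set_le[OF _ y] \<epsilon> finite[of "Suc n"] by auto
      then obtain s where s: "F y = ereal s" using lb[of y] by (cases "F y") auto
      have "F y + ereal (\<epsilon> * norm (y - xs (Suc n))) \<le> F (xs (Suc n))"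
        using y unfolding ekeland_set_def by simp
      also have "\<dots> < inf (xs n) + ereal ((1/2)^n)" by (rule step(2))
      also have "\<dots> \<le> F y + ereal ((1/2)^n)"
        unfolding inf_def using ekeland_set_trans[OF less_imp_le[OF \<epsilon>] step(1) y]
        by (intro add_right_mono INF_lower)
      finally show ?thesis using s by simp
    qed
  qed
qed

lemma ekeland_variational_principle:
  fixes F :: "'a::banach \<Rightarrow> ereal"
  assumes lsc: "lsc_fun F" and lb: "\<And>x. ereal m \<le> F x" and x0: "F x0 \<noteq> \<infinity>" and \<epsilon>: "0 < \<epsilon>"
  obtains z where "F z \<le> F x0" and "\<And>x. F z \<le> F x + ereal (\<epsilon> * norm (x - z))"
proof -
  let ?S = "ekeland_set F \<epsilon>"
  obtain xs where xs0: "xs 0 = x0" and nested: "\<And>n k. xs (n + k) \<in> ?S (xs n)"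
    and radius: "\<And>n y. y \<in> ?S (xs (Suc n)) \<Longrightarrow> \<epsilon> * norm (y - xs (Suc n)) \<le> (1/2)^n"
    using ekeland_nested_sequence[where F = F, OF lb x0 \<epsilon>] by blast
  define r where "r n = (1/2)^n / \<epsilon>" for n :: nat
  have r: "r \<longlonglongrightarrow> 0"
    unfolding r_def by (intro tendsto_divide_zero LIMSEQ_power_zero) simp
  have close: "norm (y - xs (Suc n)) \<le> r n" if "y \<in> ?S (xs (Suc n))" for n y
    using radius[OF that] \<epsilon> by (simp add: r_def field_simps)
  have close2: "norm (y - w) \<le> 2 * r n" if "y \<in> ?S (xs (Suc n))" "w \<in> ?S (xs (Suc n))" for n y w
    using norm_triangle_ineq4[of "y - xs (Suc n)" "w - xs (Suc n)"] close[OF that(1)] close[OF that(2)]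
    by simp
  have "Cauchy xs"
  proof (rule CauchyI)
    fix e :: real assume "0 < e"
    then obtain N where N: "r N < e / 2"
      using order_tendstoD(2)[OF r, of "e / 2"] by (auto simp: eventually_sequentially)
    have "norm (xs i - xs j) < e" if "Suc N \<le> i" "Suc N \<le> j" for i j
      using close2[OF nested[of "Suc N" "i - Suc N"] nested[of "Suc N" "j - Suc N"]] that N by simp
    then show "\<exists>M. \<forall>i\<ge>M. \<forall>j\<ge>M. norm (xs i - xs j) < e" by blast
  qed
  then obtain z where "xs \<longlonglongrightarrow> z" using Cauchy_convergent_iff convergent_def by blast
  have z: "z \<in> ?S (xs n)" for n
  proof (rule closed_sequentially[OF closed_ekeland_set])
    show "(\<lambda>k. xs (k + n)) \<longlonglongrightarrow> z" using \<open>xs \<longlonglongrightarrow> z\<close> by (rule LIMSEQ_ignore_initial_segment)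
    show "xs (k + n) \<in> ?S (xs n)" for k using nested[of n k] by (simp add: add.commute)
  next
    show "F x \<noteq> -\<infinity>" for x using lb[of x] by auto
  qed (rule lsc)
  show thesis
  proof
    show "F z \<le> F x0" using ekeland_set_le[OF less_imp_le[OF \<epsilon>] z[of 0]] xs0 by simp
    show "F z \<le> F x + ereal (\<epsilon> * norm (x - z))" for x
    proof (rule ccontr)
      assume less: "\<not> F z \<le> F x + ereal (\<epsilon> * norm (x - z))"
      then have x: "x \<in> ?S z" unfolding ekeland_set_def by simp
      have "norm (x - z) \<le> 2 * r n" for n
        using close2[OF ekeland_set_trans[OF less_imp_le[OF \<epsilon>] z x] z] .
      then have "norm (x - z) \<le> 0"
        using r by (intro LIMSEQ_le_const[of "\<lambda>n. 2 * r n"]) (auto intro: tendsto_mult_right_zero)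
      then show False using less by simp
    qed
  qed
qed

section \<open>Subgradients at a minimum of a sum\<close>

lemma convex_fun_dom:
  assumes "convex_fun f" and "\<And>x. f x \<noteq> -\<infinity>"
  shows "convex {x. f x \<noteq> \<infinity>}"
proof (rule convexI)
  fix x y and u v :: real
  assume "x \<in> {x. f x \<noteq> \<infinity>}" "y \<in> {x. f x \<noteq> \<infinity>}" "0 \<le> u" "0 \<le> v" "u + v = 1"
  moreover obtain a b where "f x = ereal a" "f y = ereal b"
    using calculation(1,2) assms(2)[of x] assms(2)[of y] by (cases "f x"; cases "f y") auto
  ultimately have "f (u *\<^sub>R x + v *\<^sub>R y) \<le> ereal (u * a + v * b)"
    using convex_funD_ereal[OF assms(1), of v x a y b] by (simp add: eq_diff_eq[symmetric])
  then show "u *\<^sub>R x + v *\<^sub>R y \<in> {x. f x \<noteq> \<infinity>}" by auto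
qed

lemma exists_linear_minorant_of_perturbation:
  fixes f :: "'a::real_normed_vector \<Rightarrow> ereal" and K :: "'a \<Rightarrow> real"
  assumes f: "convex_fun f" "\<And>x. f x \<noteq> -\<infinity>" and fz: "f z = ereal c"
    and K: "convex_on UNIV K" and K_lip: "\<And>x y. K x - K y \<le> L * norm (x - y)"
    and min: "\<And>x. f z + ereal (K z) \<le> f x + ereal (K x)"
  obtains p where "linear p" and "\<And>u x r. f x = ereal r \<Longrightarrow> p u \<le> r - c + K (x - u) - K z"
proof -
  define D where "D = {x. f x \<noteq> \<infinity>}"
  define fr where "fr x = real_of_ereal (f x)" for x
  have fr: "x \<in> D \<Longrightarrow> f x = ereal (fr x)" for x
    unfolding D_def fr_def using f(2)[of x] by (cases "f x") auto
  have "z \<in> D" unfolding D_def using fz by simp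
  \<comment> \<open>The value function of perturbing the argument of \<open>K\<close>; it is nonnegative at \<open>0\<close> as \<open>z\<close> is a minimiser.\<close>
  define e where "e u x = fr x - c + K (x - u) - K z" for u x
  define h where "h u = Inf (e u ` D)" for u
  have e_lower: "- (L * norm u) \<le> e u x" if "x \<in> D" for u x
    using K_lip[of x "x - u"] min[of x] fr[OF that] fz unfolding e_def by simp
  have "convex_on UNIV h"
    unfolding h_def
  proof (rule convex_on_Inf_image)
    show "convex D" unfolding D_def using f by (rule convex_fun_dom)
    show "bdd_below (e u ` D)" for u using e_lower by (intro bdd_belowI2)
    fix u v x y and t :: real
    assume xyt: "x \<in> D" "y \<in> D" "0 \<le> t" "t \<le> 1"
    have "(1 - t) *\<^sub>R x + t *\<^sub>R y \<in> D"
      using convexD[OF \<open>convex D\<close> xyt(1,2), of "1 - t" t] xyt(3,4) by simp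
    then have "fr ((1 - t) *\<^sub>R x + t *\<^sub>R y) \<le> (1 - t) * fr x + t * fr y"
      using convex_funD_ereal[OF f(1) xyt(3,4) fr[OF xyt(1)] fr[OF xyt(2)]] fr by simp
    moreover have "(1 - t) *\<^sub>R x + t *\<^sub>R y - ((1 - t) *\<^sub>R u + t *\<^sub>R v) = (1 - t) *\<^sub>R (x - u) + t *\<^sub>R (y - v)"
      by (simp add: algebra_simps)
    then have "K ((1 - t) *\<^sub>R x + t *\<^sub>R y - ((1 - t) *\<^sub>R u + t *\<^sub>R v)) \<le> (1 - t) * K (x - u) + t * K (y - v)"
      using convex_onD[OF K xyt(3,4)] by simp
    moreover have "(1 - t) * e u x + t * e v y
        = (1 - t) * fr x + t * fr y - c + ((1 - t) * K (x - u) + t * K (y - v)) - K z"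
      unfolding e_def by (simp add: algebra_simps)
    ultimately show "e ((1 - t) *\<^sub>R u + t *\<^sub>R v) ((1 - t) *\<^sub>R x + t *\<^sub>R y) \<le> (1 - t) * e u x + t * e v y"
      unfolding e_def by linarith
  qed (use \<open>z \<in> D\<close> in blast)
  moreover have "0 \<le> h 0"
  proof -
    have "0 \<le> e 0 x" if "x \<in> D" for x
      using min[of x] fr[OF that] fz unfolding e_def by simp
    then show ?thesis unfolding h_def using \<open>z \<in> D\<close> by (intro cInf_greatest) auto
  qed
  ultimately obtain p where p: "linear p" "\<And>u. p u \<le> h u"
    using convex_on_has_linear_minorant by blast
  show thesis
  proof (rule that[OF p(1)])
    fix u x r assume "f x = ereal r"
    then have "x \<in> D" "fr x = r" unfolding D_def fr_def by simp_all
    have "h u \<le> e u x"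
      unfolding h_def using e_lower \<open>x \<in> D\<close> by (intro cInf_lower bdd_belowI2) auto
    then show "p u \<le> r - c + K (x - u) - K z"
      using p(2)[of u] \<open>fr x = r\<close> unfolding e_def by simp
  qed
qed

lemma subgradient_at_minimum_of_sum:
  fixes f :: "'a::real_normed_vector \<Rightarrow> ereal" and K :: "'a \<Rightarrow> real"
  assumes f: "convex_fun f" "\<And>x. f x \<noteq> -\<infinity>" and fz: "f z = ereal c"
    and K: "convex_on UNIV K" and K_lip: "L-lipschitz_on UNIV K"
    and min: "\<And>x. f z + ereal (K z) \<le> f x + ereal (K x)"
  obtains p where "p \<in> subdiff f z" and "\<And>x. K z - K x \<le> p (x - z)"
proof -
  have K_le: "K x - K y \<le> L * norm (x - y)" for x y
    using lipschitz_on_normD[OF K_lip, of x y] by simp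
  obtain p where p: "linear p"
    and p_le: "\<And>u x r. f x = ereal r \<Longrightarrow> p u \<le> r - c + K (x - u) - K z"
    using exists_linear_minorant_of_perturbation[OF f fz K K_le min] by blast
  have p_K: "p u \<le> K (z - u) - K z" for u
    using p_le[OF fz, of u] by simp
  have "bounded_linear p"
  proof (rule bounded_linear_intro[OF linear_add[OF p] linear_scale[OF p]])
    fix u
    have "p u \<le> L * norm u" using p_K[of u] K_le[of "z - u" z] by simp
    moreover have "- p u \<le> L * norm u"
      using p_K[of "- u"] K_le[of "z + u" z] linear_neg[OF p, of u] by simp
    ultimately show "norm (p u) \<le> norm u * L" by (simp add: abs_le_iff mult.commute)
  qed
  moreover have "f z + ereal (p (x - z)) \<le> f x" for x
  proof (cases "f x")
    case (real r)
    then show ?thesis using p_le[OF real, of "x - z"] fz by simp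
  qed (use f(2) in simp_all)
  moreover have "K z - K x \<le> p (x - z)" for x
    using p_K[of "z - x"] linear_neg[OF p, of "z - x"] by simp
  ultimately show thesis using fz by (intro that) (auto simp: subdiff_def)
qed

lemma exists_penalised_minimiser:
  fixes f :: "'a::banach \<Rightarrow> ereal"
  assumes proper: "proper_fun f" and cvx: "convex_fun f" and lsc: "lsc_fun f"
    and below: "f x1 < f 0"
  obtains z K L where "f z \<noteq> \<infinity>" and "convex_on UNIV K" and "L-lipschitz_on UNIV K"
    and "\<And>x. f z + ereal (K z) \<le> f x + ereal (K x)" and "K 0 < K z"
proof -
  have f: "\<And>x. f x \<noteq> -\<infinity>" using proper unfolding proper_fun_def by blast
  obtain a where a: "f x1 = ereal a" using below f[of x1] by (cases "f x1") auto
  obtain \<delta> where \<delta>: "0 < \<delta>" and start: "ereal (a + \<delta> * norm x1) < f 0"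
    using ereal_add_mult_less[of a "f 0" "norm x1"] below a by auto
  obtain B where B: "0 \<le> B" "\<And>x. ereal (a - 1 - B * norm (x - x1)) \<le> f x"
    using convex_fun_cone_minorant[OF cvx lsc f a] by blast
  \<comment> \<open>The excess term makes \<open>f + K0\<close> bounded below, yet \<open>K0 = \<delta> * norm\<close> on the ball of radius \<open>norm x1\<close>.\<close>
  define K0 where "K0 x = \<delta> * norm x + B * max 0 (norm x - norm x1)" for x :: 'a
  define \<epsilon> where "\<epsilon> = \<delta> / 2"
  have "isCont K0 x" for x unfolding K0_def by (intro continuous_intros)
  then have lsc_F: "lsc_fun (\<lambda>x. f x + ereal (K0 x))" by (rule lsc_fun_add_continuous[OF lsc f])
  have lb_F: "ereal (a - 1 - 2 * B * norm x1) \<le> f x + ereal (K0 x)" for x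
  proof (cases "f x")
    case (real s)
    have "B * norm (x - x1) \<le> B * norm x + B * norm x1"
      using mult_left_mono[OF norm_triangle_ineq4[of x x1] B(1)] by (simp add: distrib_left)
    moreover have "B * (norm x - norm x1) \<le> B * max 0 (norm x - norm x1)"
      using B(1) by (intro mult_left_mono) auto
    moreover have "0 \<le> \<delta> * norm x" using \<delta> by simp
    ultimately show ?thesis using B(2)[of x] real unfolding K0_def by (simp add: algebra_simps)
  qed (use f in simp_all)
  have "f x1 + ereal (K0 x1) \<noteq> \<infinity>" using a by simp
  then obtain z where z_le: "f z + ereal (K0 z) \<le> f x1 + ereal (K0 x1)"
    and z_min: "\<And>x. f z + ereal (K0 z) \<le> f x + ereal (K0 x) + ereal (\<epsilon> * norm (x - z))"
    using ekeland_variational_principle[OF lsc_F lb_F] \<delta> unfolding \<epsilon>_def by (metis half_gt_zero)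
  have "f z + ereal (K0 z) < f 0"
    using z_le start a unfolding K0_def by simp
  then have "z \<noteq> 0" and "f z \<noteq> \<infinity>" unfolding K0_def by auto
  define K where "K x = K0 x + \<epsilon> * norm (x - z)" for x :: 'a
  show thesis
  proof
    show "f z \<noteq> \<infinity>" by fact
    show "convex_on UNIV K"
      unfolding K_def K0_def using \<delta> B(1) \<epsilon>_def
      by (intro convex_on_add convex_on_cmul convex_on_norm_diff[of 0, simplified]
          convex_on_norm_excess convex_on_norm_diff) simp_all
    show "(\<delta> * 1 + B * 1 + \<epsilon> * 1)-lipschitz_on UNIV K"
      unfolding K_def K0_def using \<delta> B(1) \<epsilon>_def
      by (intro lipschitz_intros lipschitz_on_norm_diff[of _ 0, simplified]
          lipschitz_on_norm_excess lipschitz_on_norm_diff) simp_all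
    show "f z + ereal (K z) \<le> f x + ereal (K x)" for x
      using z_min[of x] unfolding K_def by (simp add: add.assoc)
    have "K 0 = \<epsilon> * norm z" unfolding K_def K0_def by simp
    also have "\<dots> < \<delta> * norm z" using \<open>z \<noteq> 0\<close> \<delta> unfolding \<epsilon>_def by simp
    also have "\<dots> \<le> K z" unfolding K_def K0_def using B(1) \<delta> \<epsilon>_def by simp
    finally show "K 0 < K z" .
  qed
qed

lemma exists_lower_value_if_zero_not_subgradient:
  assumes "proper_fun f" and "(\<lambda>_. 0) \<notin> subdiff f x0"
  obtains x1 where "f x1 < f x0"
proof (cases "f x0 = \<infinity>")
  case True
  obtain x1 where "f x1 \<noteq> \<infinity>" using assms(1) unfolding proper_fun_def by blast
  then show thesis using True by (intro that[of x1]) (simp add: top.not_eq_extremum)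
next
  case False
  then obtain x1 where "\<not> f x0 \<le> f x1"
    using assms(2) unfolding subdiff_def by (auto simp: bounded_linear_zero)
  then show thesis by (intro that[of x1]) (simp add: not_le)
qed

theorem proposition1:
  fixes f :: "'a::banach \<Rightarrow> ereal"
  assumes "proper_fun f" and "convex_fun f" and "lsc_fun f"
    and "\<forall>x. \<forall>p \<in> subdiff f x. p x \<ge> 0"
  shows "(\<lambda>_. 0) \<in> subdiff f 0"
proof (rule ccontr)
  assume "(\<lambda>_. 0) \<notin> subdiff f 0"
  then obtain x1 where "f x1 < f 0"
    using exists_lower_value_if_zero_not_subgradient[OF assms(1)] by blast
  then obtain z K L where "f z \<noteq> \<infinity>" and K: "convex_on UNIV K" "L-lipschitz_on UNIV K"
    and min: "\<And>x. f z + ereal (K z) \<le> f x + ereal (K x)" and "K 0 < K z"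
    using exists_penalised_minimiser[OF assms(1-3)] by blast
  have f: "\<And>x. f x \<noteq> -\<infinity>" using assms(1) unfolding proper_fun_def by blast
  obtain c where "f z = ereal c" using \<open>f z \<noteq> \<infinity>\<close> f[of z] by (cases "f z") auto
  then obtain p where p: "p \<in> subdiff f z" and K_le: "\<And>x. K z - K x \<le> p (x - z)"
    using subgradient_at_minimum_of_sum[OF assms(2) f _ K min] by blast
  have "bounded_linear p" using p unfolding subdiff_def by (simp split: if_splits)
  then have "p (0 - z) = - p z" by (simp add: linear_simps)
  moreover have "0 \<le> p z" using assms(4) p by blast
  ultimately show False using K_le[of 0] \<open>K 0 < K z\<close> by linarith
qed

end
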